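(* Let $\mathcal{G}$ be a concave game, let $\varepsilon>0$, $s\ge1$, and for each $i$ let $d^{-i}$ be a metric on $\mathcal{A}^{-i}$. For each $i$ let $M^i:=2\max_{a^i\in\mathcal{A}^i,a^{-i}\in\mathcal{A}^{-i}}|u^i(a^i,a^{-i})|/\varepsilon^s$, $\tilde{\mathcal{A}}^i:=\mathcal{A}^i\times[0,M^i]$, and $$\tilde u^i_\varepsilon\big((a^i,\lambda^i),(a^{-i},\lambda^{-i})\big):=\min_{\hat a^{-i}\in\mathcal{A}^{-i}}\Big\{u^i(a^i,\hat a^{-i})+\lambda^i d^{-i}(a^{-i},\hat a^{-i})^s\Big\}-\lambda^i\varepsilon^s.$$ Let $\tilde{\mathcal{G}}_\varepsilon$ be the $N$-player game with action spaces $\tilde{\mathcal{A}}^i$ and payoffs $\tilde u^i_\varepsilon$. Then $\tilde{\mathcal{G}}_\varepsilon$ is a concave game, and $\bar a=(\bar a^1,\dots,\bar a^N)$ is a pure strategically robust equilibrium of $\mathcal{G}$ with robustness level $\varepsilon$ if and only if there exist $\bar\lambda^i\ge0$, $i=1,\dots,N$, such that $\big((\bar a^1,\bar\lambda^1),\dots,(\bar a^N,\bar\lambda^N)\big)$ is a Nash equilibrium of $\tilde{\mathcal{G}}_\varepsilon$.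
   Context: A concave game is an $N$-player game in which each action space $\mathcal{A}^i$ is a compact convex subset of a Euclidean space, and each payoff $u^i:\mathcal{A}^i\times\mathcal{A}^{-i}\to\mathbb{R}$ is continuous and concave in $a^i$ for each fixed $a^{-i}$, where $\mathcal{A}^{-i}:=\prod_{j\ne i}\mathcal{A}^j$ (here the original $\mathcal{A}^i\subset\mathbb{R}^n$). The metric $d^{-i}$ is compatible with the topology of $\mathcal{A}^{-i}$. A pure strategically robust equilibrium with robustness level $\varepsilon$ is $\bar a$ such that for all $i$, $\bar a^i\in\arg\max_{a^i\in\mathcal{A}^i}\min_{q\in\mathcal{S}^i_\varepsilon(\delta_{\bar a^{-i}})}\mathbb{E}_{a^{-i}\sim q}[u^i(a^i,a^{-i})]$, where $\delta_{\bar a^{-i}}$ is the Dirac measure at $\bar a^{-i}$ and $\mathcal{S}^i_\varepsilon(\mu)=\{q\in\mathcal{P}(\mathcal{A}^{-i}):W_s(\mu,q)\le\varepsilon\}$, $\mathcal{P}(\mathcal{A}^{-i})$ the Borel probability measures, $W_s(\mu,\nu)=\left(\min_{\gamma\in\Gamma(\mu,\nu)}\int d^{-i}(x,y)^s\,d\gamma(x,y)\right)^{1/s}$ over couplings $\Gamma(\mu,\nu)$. A Nash equilibrium of $\tilde{\mathcal{G}}_\varepsilon$ is a profile in which each agent's component maximizes its payoff over its own action space given the others' components. *)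

theory Defs
  imports "HOL-Analysis.Analysis" "HOL-Probability.Probability"
begin

text \<open>Players are 0,...,N-1. A profile is a function nat => action; action space of
  player i is A i. The opponents' action space A^{-i} is the set of extensional functions
  on the other players.\<close>

definition opp_space :: "nat \<Rightarrow> (nat \<Rightarrow> 'v set) \<Rightarrow> nat \<Rightarrow> (nat \<Rightarrow> 'v) set" where
  "opp_space N A i = PiE ({..<N} - {i}) A"

definition opp_profile :: "nat \<Rightarrow> nat \<Rightarrow> (nat \<Rightarrow> 'v) \<Rightarrow> (nat \<Rightarrow> 'v)" where
  "opp_profile N i a = restrict a ({..<N} - {i})"

definition concave_game ::
  "nat \<Rightarrow> (nat \<Rightarrow> 'v::euclidean_space set) \<Rightarrow> (nat \<Rightarrow> 'v \<Rightarrow> (nat \<Rightarrow> 'v) \<Rightarrow> real) \<Rightarrow> bool" where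
  "concave_game N A u \<longleftrightarrow>
     (\<forall>i<N. compact (A i) \<and> convex (A i) \<and>
        continuous_on (A i \<times> opp_space N A i) (\<lambda>(x, y). u i x y) \<and>
        (\<forall>y\<in>opp_space N A i. concave_on (A i) (\<lambda>x. u i x y)))"

definition nash_equilibrium ::
  "nat \<Rightarrow> (nat \<Rightarrow> 'v set) \<Rightarrow> (nat \<Rightarrow> 'v \<Rightarrow> (nat \<Rightarrow> 'v) \<Rightarrow> real) \<Rightarrow> (nat \<Rightarrow> 'v) \<Rightarrow> bool" where
  "nash_equilibrium N A u b \<longleftrightarrow>
     b \<in> PiE {..<N} A \<and>
     (\<forall>i<N. \<forall>x\<in>A i. u i x (opp_profile N i b) \<le> u i (b i) (opp_profile N i b))"

definition couplings :: "'a measure \<Rightarrow> 'a measure \<Rightarrow> ('a \<times> 'a) measure set" where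
  "couplings \<mu> \<nu> = {\<gamma>. prob_space \<gamma> \<and> sets \<gamma> = sets (\<mu> \<Otimes>\<^sub>M \<nu>) \<and>
      distr \<gamma> \<mu> fst = \<mu> \<and> distr \<gamma> \<nu> snd = \<nu>}"

definition wasserstein :: "('a \<Rightarrow> 'a \<Rightarrow> real) \<Rightarrow> real \<Rightarrow> 'a measure \<Rightarrow> 'a measure \<Rightarrow> real" where
  "wasserstein d s \<mu> \<nu> =
     (INF \<gamma>\<in>couplings \<mu> \<nu>. integral\<^sup>L \<gamma> (\<lambda>(x, y). d x y powr s)) powr (1 / s)"

definition borel_prob_measures :: "'a::topological_space set \<Rightarrow> 'a measure set" where
  "borel_prob_measures X = {q. prob_space q \<and> sets q = sets (restrict_space borel X)}"

definition ambiguity_set ::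
  "nat \<Rightarrow> (nat \<Rightarrow> 'v::topological_space set) \<Rightarrow> (nat \<Rightarrow> (nat \<Rightarrow> 'v) \<Rightarrow> (nat \<Rightarrow> 'v) \<Rightarrow> real)
   \<Rightarrow> real \<Rightarrow> real \<Rightarrow> nat \<Rightarrow> (nat \<Rightarrow> 'v) measure \<Rightarrow> (nat \<Rightarrow> 'v) measure set" where
  "ambiguity_set N A d s \<epsilon> i \<mu> =
     {q \<in> borel_prob_measures (opp_space N A i). wasserstein (d i) s \<mu> q \<le> \<epsilon>}"

definition robust_value ::
  "nat \<Rightarrow> (nat \<Rightarrow> 'v::topological_space set) \<Rightarrow> (nat \<Rightarrow> 'v \<Rightarrow> (nat \<Rightarrow> 'v) \<Rightarrow> real)
   \<Rightarrow> (nat \<Rightarrow> (nat \<Rightarrow> 'v) \<Rightarrow> (nat \<Rightarrow> 'v) \<Rightarrow> real) \<Rightarrow> real \<Rightarrow> real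
   \<Rightarrow> nat \<Rightarrow> (nat \<Rightarrow> 'v) \<Rightarrow> 'v \<Rightarrow> real" where
  "robust_value N A u d s \<epsilon> i abar x =
     (INF q\<in>ambiguity_set N A d s \<epsilon> i
              (return (restrict_space borel (opp_space N A i)) (opp_profile N i abar)).
        integral\<^sup>L q (\<lambda>y. u i x y))"

definition strategically_robust_eq ::
  "nat \<Rightarrow> (nat \<Rightarrow> 'v::topological_space set) \<Rightarrow> (nat \<Rightarrow> 'v \<Rightarrow> (nat \<Rightarrow> 'v) \<Rightarrow> real)
   \<Rightarrow> (nat \<Rightarrow> (nat \<Rightarrow> 'v) \<Rightarrow> (nat \<Rightarrow> 'v) \<Rightarrow> real) \<Rightarrow> real \<Rightarrow> real \<Rightarrow> (nat \<Rightarrow> 'v) \<Rightarrow> bool" where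
  "strategically_robust_eq N A u d s \<epsilon> abar \<longleftrightarrow>
     (\<forall>i<N. abar i \<in> A i \<and>
        (\<forall>x\<in>A i. robust_value N A u d s \<epsilon> i abar x \<le> robust_value N A u d s \<epsilon> i abar (abar i)))"

definition lift_bound ::
  "nat \<Rightarrow> (nat \<Rightarrow> 'v set) \<Rightarrow> (nat \<Rightarrow> 'v \<Rightarrow> (nat \<Rightarrow> 'v) \<Rightarrow> real) \<Rightarrow> real \<Rightarrow> real \<Rightarrow> nat \<Rightarrow> real" where
  "lift_bound N A u s \<epsilon> i =
     2 * (SUP p\<in>A i \<times> opp_space N A i. \<bar>u i (fst p) (snd p)\<bar>) / \<epsilon> powr s"

definition lift_actions ::
  "nat \<Rightarrow> (nat \<Rightarrow> 'v set) \<Rightarrow> (nat \<Rightarrow> 'v \<Rightarrow> (nat \<Rightarrow> 'v) \<Rightarrow> real) \<Rightarrow> real \<Rightarrow> real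
   \<Rightarrow> nat \<Rightarrow> ('v \<times> real) set" where
  "lift_actions N A u s \<epsilon> i = A i \<times> {0 .. lift_bound N A u s \<epsilon> i}"

definition lift_payoff ::
  "nat \<Rightarrow> (nat \<Rightarrow> 'v set) \<Rightarrow> (nat \<Rightarrow> 'v \<Rightarrow> (nat \<Rightarrow> 'v) \<Rightarrow> real)
   \<Rightarrow> (nat \<Rightarrow> (nat \<Rightarrow> 'v) \<Rightarrow> (nat \<Rightarrow> 'v) \<Rightarrow> real) \<Rightarrow> real \<Rightarrow> real
   \<Rightarrow> nat \<Rightarrow> 'v \<times> real \<Rightarrow> (nat \<Rightarrow> 'v \<times> real) \<Rightarrow> real" where
  "lift_payoff N A u d s \<epsilon> i xl b =
     (INF ah\<in>opp_space N A i.
        u i (fst xl) ah + snd xl * (d i (opp_profile N i (\<lambda>j. fst (b j))) ah) powr s)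
     - snd xl * \<epsilon> powr s"

end

theory Submission
  imports Defs
begin

text \<open>
  Fix a player i, an action x and the opponents' profile p. The robust value of x is the
  minimum of the expected payoff q \<mapsto> \<integral> u(x, y) dq over the probability measures q with
  \<integral> d(p, y)^s dq \<le> \<epsilon>^s, because every coupling with the Dirac measure at p is the product
  coupling. This is a minimisation with a single linear constraint, and its Lagrangian dual
  function l \<mapsto> inf_y (u(x, y) + l d(p, y)^s) - l \<epsilon>^s is exactly the lifted payoff.
  Strong duality holds with an optimal multiplier in [0, M]: for larger l the dual function
  is below -max |u|, a lower bound for its value at l = 0. At an optimal multiplier l,
  comparing with l + \<delta> and l - \<delta> for small \<delta> > 0 produces two minimisers of the
  Lagrangian, one with d(p, y)^s \<le> \<epsilon>^s and (if l > 0) one with d(p, y)^s \<ge> \<epsilon>^s; the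
  mixture of their Dirac measures that makes the constraint tight is feasible and attains
  the dual value.

  Hence the robust value of x is the maximum of the lifted payoff over l \<in> [0, M], so a
  profile maximises every player's robust value iff, paired with maximising multipliers, it
  is a Nash equilibrium of the lifted game. The lifted game is concave because infima of
  functions concave in (x, l) are concave, and continuous because infima over a compact set
  of jointly continuous functions are continuous.
\<close>

lemma continuous_on_slice:
  assumes "continuous_on (X \<times> Y) (\<lambda>(x, y). f x y)" and "x \<in> X"
  shows "continuous_on Y (f x)"
  using continuous_on_o_Pair[OF assms] by (simp add: o_def)

lemma bdd_below_image_compact:
  fixes f :: "'a::topological_space \<Rightarrow> real"
  assumes "compact Y" and "continuous_on Y f"
  shows "bdd_below (f ` Y)"
  using compact_continuous_image[OF assms(2,1)] by (simp add: bounded_imp_bdd_below compact_imp_bounded)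

lemma abs_INF_diff_le:
  fixes f g :: "'b \<Rightarrow> real"
  assumes "Y \<noteq> {}" and "bdd_below (f ` Y)" and "bdd_below (g ` Y)"
    and "\<And>y. y \<in> Y \<Longrightarrow> \<bar>f y - g y\<bar> \<le> r"
  shows "\<bar>(INF y\<in>Y. f y) - (INF y\<in>Y. g y)\<bar> \<le> r"
proof -
  have "(INF y\<in>Y. f y) \<le> (INF y\<in>Y. g y) + r"
    if bdd: "bdd_below (f ` Y)" and le: "\<And>y. y \<in> Y \<Longrightarrow> f y \<le> g y + r" for f g :: "'b \<Rightarrow> real"
  proof -
    have "(INF y\<in>Y. f y) - r \<le> g y" if "y \<in> Y" for y
      using cINF_lower[OF bdd that] le[OF that] by linarith
    then have "(INF y\<in>Y. f y) - r \<le> (INF y\<in>Y. g y)"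
      by (rule cINF_greatest[OF assms(1)])
    then show ?thesis by simp
  qed
  from this[of f g] this[of g f] show ?thesis
    using assms by (fastforce simp: abs_le_iff)
qed

lemma continuous_on_INF_compact:
  fixes F :: "'a::metric_space \<Rightarrow> 'b::metric_space \<Rightarrow> real"
  assumes Z: "compact Z" and Y: "compact Y" "Y \<noteq> {}"
    and F: "continuous_on (Z \<times> Y) (\<lambda>(z, y). F z y)"
  shows "continuous_on Z (\<lambda>z. INF y\<in>Y. F z y)"
proof (rule uniformly_continuous_imp_continuous, unfold uniformly_continuous_on_def, intro allI impI)
  fix e :: real assume "e > 0"
  obtain r where "r > 0" and r: "\<And>w w'. w \<in> Z \<times> Y \<Longrightarrow> w' \<in> Z \<times> Y \<Longrightarrow> dist w' w < r \<Longrightarrow>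
      dist ((\<lambda>(z, y). F z y) w') ((\<lambda>(z, y). F z y) w) < e / 2"
    using compact_uniformly_continuous[OF F compact_Times[OF Z Y(1)]] \<open>e > 0\<close>
    unfolding uniformly_continuous_on_def by (metis half_gt_zero)
  have "\<bar>(INF y\<in>Y. F z' y) - (INF y\<in>Y. F z y)\<bar> \<le> e / 2"
    if "z \<in> Z" "z' \<in> Z" "dist z' z < r" for z z'
  proof (rule abs_INF_diff_le[OF Y(2)])
    show "bdd_below (F z' ` Y)" "bdd_below (F z ` Y)"
      using that by (auto intro!: bdd_below_image_compact[OF Y(1)] continuous_on_slice[OF F])
    show "\<bar>F z' y - F z y\<bar> \<le> e / 2" if "y \<in> Y" for y
      using r[of "(z, y)" "(z', y)"] \<open>z \<in> Z\<close> \<open>z' \<in> Z\<close> \<open>dist z' z < r\<close> that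
      by (simp add: dist_Pair_Pair dist_real_def)
  qed
  then show "\<exists>r>0. \<forall>z\<in>Z. \<forall>z'\<in>Z. dist z' z < r \<longrightarrow> dist (INF y\<in>Y. F z' y) (INF y\<in>Y. F z y) < e"
    using \<open>r > 0\<close> \<open>e > 0\<close> by (force simp: dist_real_def)
qed

lemma abs_le_SUP_abs_compact:
  fixes f :: "'a::topological_space \<Rightarrow> real"
  assumes "compact S" and "continuous_on S f" and "z \<in> S"
  shows "\<bar>f z\<bar> \<le> (SUP z\<in>S. \<bar>f z\<bar>)"
proof (rule cSUP_upper[OF assms(3)])
  have "continuous_on S (\<lambda>z. \<bar>f z\<bar>)"
    by (intro continuous_intros assms(2))
  from compact_continuous_image[OF this assms(1)] show "bdd_above ((\<lambda>z. \<bar>f z\<bar>) ` S)"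
    by (simp add: bounded_imp_bdd_above compact_imp_bounded)
qed

lemma compact_PiE:
  fixes S :: "'i \<Rightarrow> 'b::topological_space set"
  assumes "\<And>j. j \<in> I \<Longrightarrow> compact (S j)"
  shows "compact (PiE I S)"
proof -
  define S' where "S' j = (if j \<in> I then S j else {undefined})" for j
  have eq: "PiE I S = PiE UNIV S'"
    by (auto simp: S'_def PiE_iff extensional_def split: if_splits)
  have "compactin (product_topology (\<lambda>_. euclidean) UNIV) (PiE UNIV S')"
    unfolding compactin_PiE using assms by (auto simp: S'_def)
  then show ?thesis unfolding eq euclidean_product_topology by simp
qed

lemma compact_sublevel_set:
  fixes c :: "'a::t2_space \<Rightarrow> real"
  assumes "compact Y" and "continuous_on Y c"
  shows "compact {y \<in> Y. c y \<le> e}"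
proof -
  have "{y \<in> Y. c y \<le> e} = Y \<inter> (Y \<inter> c -` {..e})" by auto
  then show ?thesis
    using compact_Int_closed[OF assms(1) continuous_closed_preimage[OF assms(2)
          compact_imp_closed[OF assms(1)] closed_atMost]] by simp
qed

lemma continuous_on_metric_compatible:
  assumes "Metric_space Y d" and "Metric_space.mtopology Y d = subtopology euclidean Y"
  shows "continuous_on (Y \<times> Y) (\<lambda>(x, y). d x y)"
proof -
  interpret Metric_space Y d by fact
  have "continuous_map (prod_topology mtopology mtopology) euclidean (\<lambda>(x, y). d x y)"
    using continuous_map_metric[of "metric (Y, d)"] by simp
  then show ?thesis
    using assms(2) by (simp flip: subtopology_Times)
qed

lemma concave_on_INF:
  fixes F :: "'a::real_vector \<Rightarrow> 'b \<Rightarrow> real"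
  assumes "convex Z" and "Y \<noteq> {}" and "\<And>y. y \<in> Y \<Longrightarrow> concave_on Z (\<lambda>z. F z y)"
    and "\<And>z. z \<in> Z \<Longrightarrow> bdd_below ((\<lambda>y. F z y) ` Y)"
  shows "concave_on Z (\<lambda>z. INF y\<in>Y. F z y)"
  unfolding concave_on_iff
proof (intro conjI ballI allI impI assms(1))
  fix x x' :: 'a and a b :: real
  assume x: "x \<in> Z" "x' \<in> Z" and ab: "a \<ge> 0" "b \<ge> 0" "a + b = 1"
  show "a * (INF y\<in>Y. F x y) + b * (INF y\<in>Y. F x' y) \<le> (INF y\<in>Y. F (a *\<^sub>R x + b *\<^sub>R x') y)"
  proof (rule cINF_greatest[OF assms(2)])
    fix y assume y: "y \<in> Y"
    have "a * (INF y\<in>Y. F x y) + b * (INF y\<in>Y. F x' y) \<le> a * F x y + b * F x' y"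
      using ab by (intro add_mono mult_left_mono cINF_lower assms(4) x y) auto
    also have "\<dots> \<le> F (a *\<^sub>R x + b *\<^sub>R x') y"
      using assms(3)[OF y] x ab unfolding concave_on_iff by blast
    finally show "a * (INF y\<in>Y. F x y) + b * (INF y\<in>Y. F x' y) \<le> F (a *\<^sub>R x + b *\<^sub>R x') y" .
  qed
qed

lemma convex_on_snd_mult:
  "convex S \<Longrightarrow> convex_on S (\<lambda>z. snd z * c)"
  by (simp add: convex_on_def algebra_simps)

lemma concave_on_snd_mult:
  "convex S \<Longrightarrow> concave_on S (\<lambda>z. snd z * c)"
  using convex_on_snd_mult[of S "- c"] by (simp add: concave_on_def)

lemma concave_on_fst_Times:
  assumes "concave_on A f" and "convex L"
  shows "concave_on (A \<times> L) (\<lambda>z. f (fst z))"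
  using assms by (auto simp: concave_on_iff convex_Times)

lemma maximiser_of_max_iff:
  fixes V :: "'a \<Rightarrow> 'c::preorder"
  assumes "a \<in> X"
    and V: "\<And>x. x \<in> X \<Longrightarrow> \<exists>l\<in>L. (\<forall>l'\<in>L. \<Phi> x l' \<le> \<Phi> x l) \<and> V x = \<Phi> x l"
  shows "(\<forall>x\<in>X. V x \<le> V a) \<longleftrightarrow> (\<exists>m\<in>L. \<forall>x\<in>X. \<forall>l\<in>L. \<Phi> x l \<le> \<Phi> a m)"
proof
  assume max: "\<forall>x\<in>X. V x \<le> V a"
  obtain m where "m \<in> L" "V a = \<Phi> a m"
    using V[OF \<open>a \<in> X\<close>] by blast
  have "\<Phi> x l \<le> \<Phi> a m" if "x \<in> X" "l \<in> L" for x l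
  proof -
    have "\<Phi> x l \<le> V x" using V[OF that(1)] that(2) by auto
    also have "\<dots> \<le> V a" using max that(1) by blast
    finally show ?thesis using \<open>V a = \<Phi> a m\<close> by simp
  qed
  with \<open>m \<in> L\<close> show "\<exists>m\<in>L. \<forall>x\<in>X. \<forall>l\<in>L. \<Phi> x l \<le> \<Phi> a m"
    by blast
next
  assume "\<exists>m\<in>L. \<forall>x\<in>X. \<forall>l\<in>L. \<Phi> x l \<le> \<Phi> a m"
  then obtain m where "m \<in> L" and m: "\<And>x l. x \<in> X \<Longrightarrow> l \<in> L \<Longrightarrow> \<Phi> x l \<le> \<Phi> a m"
    by blast
  have "V x \<le> V a" if x: "x \<in> X" for x
  proof -
    obtain lx where "lx \<in> L" "V x = \<Phi> x lx" using V[OF x] by blast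
    then have "V x \<le> \<Phi> a m" using m[OF x] by simp
    also have "\<dots> \<le> V a" using V[OF \<open>a \<in> X\<close>] \<open>m \<in> L\<close> by auto
    finally show ?thesis .
  qed
  then show "\<forall>x\<in>X. V x \<le> V a" by blast
qed

section \<open>Lagrangian duality for a single inequality constraint\<close>

definition lagrangian_dual :: "'a set \<Rightarrow> ('a \<Rightarrow> real) \<Rightarrow> ('a \<Rightarrow> real) \<Rightarrow> real \<Rightarrow> real \<Rightarrow> real" where
  "lagrangian_dual Y g c e l = (INF y\<in>Y. g y + l * c y) - l * e"

lemma lagrangian_dual_uminus:
  "lagrangian_dual Y g (\<lambda>y. - c y) (- e) (- l) = lagrangian_dual Y g c e l"
  by (simp add: lagrangian_dual_def)

lemma lagrangian_dual_le:
  fixes g c :: "'a::topological_space \<Rightarrow> real"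
  assumes "compact Y" "continuous_on Y g" "continuous_on Y c" "y \<in> Y"
  shows "lagrangian_dual Y g c e l \<le> g y + l * c y - l * e"
proof -
  have "continuous_on Y (\<lambda>y. g y + l * c y)"
    by (intro continuous_intros assms(2,3))
  from cINF_lower[OF bdd_below_image_compact[OF assms(1) this] assms(4)] show ?thesis
    by (simp add: lagrangian_dual_def)
qed

lemma lagrangian_dual_eq_minimum:
  assumes "y \<in> Y" "\<And>y'. y' \<in> Y \<Longrightarrow> g y + l * c y \<le> g y' + l * c y'"
  shows "lagrangian_dual Y g c e l = g y + l * c y - l * e"
  unfolding lagrangian_dual_def using assms by (subst cInf_eq_minimum) auto

lemma continuous_on_lagrangian_dual:
  fixes G C :: "'a::metric_space \<Rightarrow> 'b::metric_space \<Rightarrow> real"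
  assumes Z: "compact Z" and Y: "compact Y" "Y \<noteq> {}"
    and G: "continuous_on (Z \<times> Y) (\<lambda>(z, y). G z y)" and C: "continuous_on (Z \<times> Y) (\<lambda>(z, y). C z y)"
    and L: "continuous_on Z L"
  shows "continuous_on Z (\<lambda>z. lagrangian_dual Y (G z) (C z) e (L z))"
proof -
  have "continuous_on (Z \<times> Y) (\<lambda>w. L (fst w))"
    by (rule continuous_on_compose2[OF L]) (auto intro: continuous_intros)
  with G C have "continuous_on (Z \<times> Y) (\<lambda>(z, y). G z y + L z * C z y)"
    by (simp add: case_prod_beta' continuous_intros)
  then show ?thesis
    unfolding lagrangian_dual_def
    by (intro continuous_intros continuous_on_INF_compact[OF Z Y] L)
qed

lemma lagrangian_minimiser_exists:
  fixes g c :: "'a::topological_space \<Rightarrow> real"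
  assumes "compact Y" "Y \<noteq> {}" "continuous_on Y g" "continuous_on Y c"
  obtains y where "y \<in> Y" "\<And>y'. y' \<in> Y \<Longrightarrow> g y + l * c y \<le> g y' + l * c y'"
proof -
  have "continuous_on Y (\<lambda>y. g y + l * c y)"
    by (intro continuous_intros assms(3,4))
  from continuous_attains_inf[OF assms(1,2) this] show ?thesis
    using that by blast
qed

lemma lagrangian_minimiser_perturbed:
  fixes g c :: "'a::topological_space \<Rightarrow> real"
  assumes Y: "compact Y" and g: "continuous_on Y g" and c: "continuous_on Y c"
    and "\<delta> > 0" and \<delta>: "lagrangian_dual Y g c e (l + \<delta>) \<le> lagrangian_dual Y g c e l"
    and y: "y \<in> Y" and ymin: "\<And>y'. y' \<in> Y \<Longrightarrow> g y + (l + \<delta>) * c y \<le> g y' + (l + \<delta>) * c y'"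
  shows "c y \<le> e" and "g y + l * c y \<le> lagrangian_dual Y g c e l + l * e + \<delta> * (e - c y)"
proof -
  have "g y + (l + \<delta>) * c y - (l + \<delta>) * e \<le> lagrangian_dual Y g c e l"
    using \<delta> lagrangian_dual_eq_minimum[where g = g and c = c and l = "l + \<delta>", OF y ymin] by simp
  moreover have "lagrangian_dual Y g c e l \<le> g y + l * c y - l * e"
    by (rule lagrangian_dual_le[OF Y g c y])
  ultimately have "\<delta> * c y \<le> \<delta> * e" and "g y + l * c y \<le> lagrangian_dual Y g c e l + l * e + \<delta> * (e - c y)"
    by (simp_all add: algebra_simps)
  then show "c y \<le> e" and "g y + l * c y \<le> lagrangian_dual Y g c e l + l * e + \<delta> * (e - c y)"
    using \<open>\<delta> > 0\<close> by simp_all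
qed

lemma lagrangian_minimiser_constraint_le:
  fixes g c :: "'a::t2_space \<Rightarrow> real"
  assumes Y: "compact Y" "Y \<noteq> {}" and g: "continuous_on Y g" and c: "continuous_on Y c"
    and right: "\<forall>\<^sub>F \<delta> in at_right 0. lagrangian_dual Y g c e (l + \<delta>) \<le> lagrangian_dual Y g c e l"
  obtains y where "y \<in> Y" "c y \<le> e" "\<And>y'. y' \<in> Y \<Longrightarrow> g y + l * c y \<le> g y' + l * c y'"
proof -
  define L where "L y = g y + l * c y" for y
  define D where "D = lagrangian_dual Y g c e l + l * e"
  define F where "F = {y \<in> Y. c y \<le> e}"
  obtain C where C: "\<And>y. y \<in> Y \<Longrightarrow> \<bar>c y\<bar> \<le> C"
    using compact_imp_bounded[OF compact_continuous_image[OF c Y(1)]] by (auto simp: bounded_iff)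
  have "\<forall>\<^sub>F \<delta> in at_right 0. \<exists>y\<in>F. L y \<le> D + \<delta> * (C + e)"
    using right eventually_at_right_less
  proof eventually_elim
    case (elim \<delta>)
    obtain y where y: "y \<in> Y"
      and ymin: "\<And>y'. y' \<in> Y \<Longrightarrow> g y + (l + \<delta>) * c y \<le> g y' + (l + \<delta>) * c y'"
      using lagrangian_minimiser_exists[OF Y g c] by blast
    note perturbed = lagrangian_minimiser_perturbed[OF Y(1) g c elim(2) elim(1) y ymin]
    have "\<delta> * (e - c y) \<le> \<delta> * (C + e)"
      using C[OF y] elim(2) by (intro mult_left_mono) auto
    then have "L y \<le> D + \<delta> * (C + e)"
      using perturbed(2) unfolding L_def D_def by linarith
    with perturbed(1) y show ?case
      by (auto simp: F_def)
  qed
  note eventually_near_min = this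
  then obtain y0 where "y0 \<in> F" using eventually_happens'[OF trivial_limit_at_right_real] by blast
  have "compact F" unfolding F_def by (rule compact_sublevel_set[OF Y(1) c])
  moreover have "F \<noteq> {}" using \<open>y0 \<in> F\<close> by blast
  moreover have "continuous_on F L" unfolding L_def F_def
    by (intro continuous_intros continuous_on_subset[OF g] continuous_on_subset[OF c]) auto
  ultimately obtain y where y: "y \<in> F" and ymin: "\<And>y'. y' \<in> F \<Longrightarrow> L y \<le> L y'"
    by (metis continuous_attains_inf)
  have "L y \<le> D"
  proof (rule tendsto_le[OF trivial_limit_at_right_real _ tendsto_const])
    show "((\<lambda>\<delta>. D + \<delta> * (C + e)) \<longlongrightarrow> D) (at_right 0)"
      by (auto intro!: tendsto_eq_intros)
    show "\<forall>\<^sub>F \<delta> in at_right 0. L y \<le> D + \<delta> * (C + e)"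
      using eventually_near_min by eventually_elim (use ymin in fastforce)
  qed
  moreover have "D \<le> L y'" if "y' \<in> Y" for y'
    using lagrangian_dual_le[OF Y(1) g c that, of e l] by (simp add: L_def D_def)
  ultimately have "L y \<le> L y'" if "y' \<in> Y" for y'
    using that by fastforce
  with that[of y] y show ?thesis
    unfolding F_def L_def by blast
qed

lemma lagrangian_minimiser_constraint_ge:
  fixes g c :: "'a::t2_space \<Rightarrow> real"
  assumes Y: "compact Y" "Y \<noteq> {}" and g: "continuous_on Y g" and c: "continuous_on Y c"
    and left: "\<forall>\<^sub>F \<delta> in at_right 0. lagrangian_dual Y g c e (l - \<delta>) \<le> lagrangian_dual Y g c e l"
  obtains y where "y \<in> Y" "e \<le> c y" "\<And>y'. y' \<in> Y \<Longrightarrow> g y + l * c y \<le> g y' + l * c y'"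
proof -
  \<comment> \<open>Negating c, e and l leaves the dual function unchanged and turns l - \<delta> into -l + \<delta>.\<close>
  have shift: "lagrangian_dual Y g (\<lambda>y. - c y) (- e) (- l + \<delta>) = lagrangian_dual Y g c e (l - \<delta>)"
    for \<delta>
    using lagrangian_dual_uminus[of Y g c e "l - \<delta>"] by simp
  have "\<forall>\<^sub>F \<delta> in at_right 0.
      lagrangian_dual Y g (\<lambda>y. - c y) (- e) (- l + \<delta>) \<le> lagrangian_dual Y g (\<lambda>y. - c y) (- e) (- l)"
    using left by (simp only: shift lagrangian_dual_uminus)
  from lagrangian_minimiser_constraint_le[OF Y g continuous_on_minus[OF c] this]
  obtain y where "y \<in> Y" "- c y \<le> - e"
    and "\<And>y'. y' \<in> Y \<Longrightarrow> g y + - l * - c y \<le> g y' + - l * - c y'"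
    by blast
  with that show ?thesis by simp
qed

lemma lagrangian_dual_maximum_exists:
  fixes g c :: "'a::metric_space \<Rightarrow> real"
  assumes Y: "compact Y" and p: "p \<in> Y" and g: "continuous_on Y g" and c: "continuous_on Y c"
    and "c p \<le> 0" and "e > 0" and K: "\<And>y. y \<in> Y \<Longrightarrow> \<bar>g y\<bar> \<le> K"
  obtains l where "l \<in> {0..2 * K / e}"
    and "\<And>l'. l' \<ge> 0 \<Longrightarrow> lagrangian_dual Y g c e l' \<le> lagrangian_dual Y g c e l"
proof -
  define M where "M = 2 * K / e"
  have "M \<ge> 0" using K[OF p] \<open>e > 0\<close> by (simp add: M_def)
  have "continuous_on ({0..M} \<times> Y) (\<lambda>(l, y). g y)" "continuous_on ({0..M} \<times> Y) (\<lambda>(l, y). c y)"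
    by (auto simp: case_prod_beta' intro!: continuous_on_compose2[OF g] continuous_on_compose2[OF c]
        continuous_intros)
  from continuous_on_lagrangian_dual[OF compact_Icc Y _ this continuous_on_id] p
  have "continuous_on {0..M} (lagrangian_dual Y g c e)"
    by auto
  moreover have "{0..M} \<noteq> {}" using \<open>M \<ge> 0\<close> by simp
  ultimately obtain l where l: "l \<in> {0..M}"
    and lmax: "\<And>l'. l' \<in> {0..M} \<Longrightarrow> lagrangian_dual Y g c e l' \<le> lagrangian_dual Y g c e l"
    using continuous_attains_sup[OF compact_Icc] by blast
  have beyond: "lagrangian_dual Y g c e l' \<le> lagrangian_dual Y g c e l" if "l' > M" for l'
  proof -
    have "lagrangian_dual Y g c e l' \<le> K - l' * e"
      using lagrangian_dual_le[OF Y g c p, of e l'] K[OF p] mult_left_mono[OF \<open>c p \<le> 0\<close>, of l']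
        that \<open>M \<ge> 0\<close> by (simp add: abs_le_iff)
    also have "\<dots> \<le> - K"
      using mult_right_mono[of M l' e] that \<open>e > 0\<close> by (simp add: M_def)
    also have "\<dots> \<le> lagrangian_dual Y g c e 0"
    proof -
      have "- K \<le> g y + 0 * c y" if "y \<in> Y" for y
        using K[OF that] by simp
      then show ?thesis
        unfolding lagrangian_dual_def using p by (auto intro!: cINF_greatest)
    qed
    also have "\<dots> \<le> lagrangian_dual Y g c e l"
      using lmax \<open>M \<ge> 0\<close> by simp
    finally show ?thesis .
  qed
  show ?thesis
  proof (rule that[OF l[unfolded M_def]])
    fix l' :: real assume "l' \<ge> 0"
    then show "lagrangian_dual Y g c e l' \<le> lagrangian_dual Y g c e l"
      using lmax beyond by (cases "l' \<le> M") auto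
  qed
qed

lemma convex_combination_eq_zero:
  fixes a b :: real
  assumes "a \<le> 0" "0 \<le> b"
  obtains t where "t \<in> {0..1}" "t * a + (1 - t) * b = 0"
proof (cases "a = b")
  case True
  with assms that[of 1] show ?thesis by simp
next
  case False
  with assms have "b - a > 0" by simp
  with assms show ?thesis
    by (intro that[of "b / (b - a)"]) (auto simp: field_simps)
qed

lemma lagrangian_dual_attained_by_two_points:
  fixes g c :: "'a::t2_space \<Rightarrow> real"
  assumes Y: "compact Y" "Y \<noteq> {}" and g: "continuous_on Y g" and c: "continuous_on Y c"
    and "l \<ge> 0" and lmax: "\<And>l'. l' \<ge> 0 \<Longrightarrow> lagrangian_dual Y g c e l' \<le> lagrangian_dual Y g c e l"
  obtains y1 y2 t where "y1 \<in> Y" "y2 \<in> Y" "t \<in> {0..1}" "t * c y1 + (1 - t) * c y2 \<le> e"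
    "t * g y1 + (1 - t) * g y2 = lagrangian_dual Y g c e l"
proof -
  have "\<forall>\<^sub>F \<delta> in at_right 0. lagrangian_dual Y g c e (l + \<delta>) \<le> lagrangian_dual Y g c e l"
    using eventually_at_right_less by eventually_elim (use lmax \<open>l \<ge> 0\<close> in simp)
  then obtain y1 where y1: "y1 \<in> Y" "c y1 \<le> e"
    and y1min: "\<And>y'. y' \<in> Y \<Longrightarrow> g y1 + l * c y1 \<le> g y' + l * c y'"
    using lagrangian_minimiser_constraint_le[OF Y g c] by blast
  have g1: "g y1 = lagrangian_dual Y g c e l - l * c y1 + l * e"
    using lagrangian_dual_eq_minimum[where g = g and c = c and l = l, OF y1(1) y1min] by simp
  show ?thesis
  proof (cases "l = 0")
    case True
    with y1 g1 that[of y1 y1 1] show ?thesis by simp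
  next
    case False
    with \<open>l \<ge> 0\<close> have "l > 0" by simp
    have "\<forall>\<^sub>F \<delta> in at_right 0. lagrangian_dual Y g c e (l - \<delta>) \<le> lagrangian_dual Y g c e l"
      using eventually_at_right_real[OF \<open>l > 0\<close>] by eventually_elim (use lmax in simp)
    then obtain y2 where y2: "y2 \<in> Y" "e \<le> c y2"
      and y2min: "\<And>y'. y' \<in> Y \<Longrightarrow> g y2 + l * c y2 \<le> g y' + l * c y'"
      using lagrangian_minimiser_constraint_ge[OF Y g c] by blast
    have g2: "g y2 = lagrangian_dual Y g c e l - l * c y2 + l * e"
      using lagrangian_dual_eq_minimum[where g = g and c = c and l = l, OF y2(1) y2min] by simp
    obtain t where t: "t \<in> {0..1}" and "t * (c y1 - e) + (1 - t) * (c y2 - e) = 0"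
      using convex_combination_eq_zero[of "c y1 - e" "c y2 - e"] y1 y2 by auto
    then have ct: "t * c y1 + (1 - t) * c y2 = e"
      by (simp add: algebra_simps)
    have "t * g y1 + (1 - t) * g y2
        = lagrangian_dual Y g c e l + l * e - l * (t * c y1 + (1 - t) * c y2)"
      by (simp add: g1 g2 algebra_simps)
    with ct have "t * g y1 + (1 - t) * g y2 = lagrangian_dual Y g c e l"
      by simp
    with that[OF y1(1) y2(1) t] ct show ?thesis by simp
  qed
qed

section \<open>Wasserstein balls around a Dirac measure\<close>

lemma borel_measurable_pair_restrict_space:
  fixes f :: "'a::second_countable_topology \<times> 'a \<Rightarrow> real"
  assumes "continuous_on (Y \<times> Y) f"
  shows "f \<in> borel_measurable (restrict_space borel Y \<Otimes>\<^sub>M restrict_space borel Y)"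
proof -
  have "(\<lambda>z. z) \<in> measurable (restrict_space borel Y \<Otimes>\<^sub>M restrict_space borel Y)
      (restrict_space borel (Y \<times> Y))"
  proof (rule measurable_restrict_space2)
    have "(\<lambda>x. x) \<in> measurable (restrict_space borel Y) borel"
      by (intro measurable_restrict_space1) measurable
    then show "(\<lambda>z. z) \<in> measurable (restrict_space borel Y \<Otimes>\<^sub>M restrict_space borel Y) borel"
      by (simp add: borel_prod[symmetric] measurable_pair_iff o_def)
  qed (auto simp: space_pair_measure space_restrict_space)
  from measurable_compose[OF this borel_measurable_continuous_on_restrict[OF assms]] show ?thesis
    by simp
qed

lemma integral_coupling_return:
  fixes f :: "'a \<times> 'a \<Rightarrow> real"
  assumes \<gamma>: "\<gamma> \<in> couplings (return M p) q" and p: "p \<in> space M" "{p} \<in> sets M"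
    and q: "sets q = sets M" and f: "f \<in> borel_measurable (M \<Otimes>\<^sub>M M)"
  shows "integral\<^sup>L \<gamma> f = (\<integral>y. f (p, y) \<partial>q)"
proof -
  have sets_\<gamma>: "sets \<gamma> = sets (M \<Otimes>\<^sub>M M)"
    using \<gamma> q by (simp add: couplings_def cong: sets_pair_measure_cong)
  have marginals: "distr \<gamma> (return M p) fst = return M p" "distr \<gamma> q snd = q"
    using \<gamma> by (simp_all add: couplings_def)
  have fst: "fst \<in> measurable \<gamma> (return M p)" and snd: "snd \<in> measurable \<gamma> q"
    using measurable_fst[of M M] measurable_snd[of M M] sets_\<gamma> q
    by (simp_all cong: measurable_cong_sets)
  have f_p: "(\<lambda>y. f (p, y)) \<in> borel_measurable M"
    by (rule measurable_Pair2[OF f p(1)])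
  have "Measurable.pred M (\<lambda>x. x = p)"
  proof -
    have "{x \<in> space M. x = p} = {p}" using p(1) by auto
    then show ?thesis using p(2) by (simp add: pred_def)
  qed
  then have "AE x in return M p. x = p"
    using AE_return[OF p(1)] by blast
  then have "AE z in \<gamma>. fst z = p"
    by (intro AE_distrD[OF fst]) (simp only: marginals)
  then have "integral\<^sup>L \<gamma> f = (\<integral>z. f (p, snd z) \<partial>\<gamma>)"
    using f measurable_compose[OF measurable_snd f_p] sets_\<gamma>
    by (intro integral_cong_AE) (auto cong: measurable_cong_sets elim!: eventually_mono)
  also have "\<dots> = (\<integral>y. f (p, y) \<partial>distr \<gamma> q snd)"
    using integral_distr[OF snd, of "\<lambda>y. f (p, y)"] f_p q by (simp cong: measurable_cong_sets)
  also have "\<dots> = (\<integral>y. f (p, y) \<partial>q)"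
    by (simp add: marginals)
  finally show ?thesis .
qed

lemma distr_Pair_in_couplings_return:
  assumes q: "prob_space q" "sets q = sets M" and p: "p \<in> space M"
  shows "distr q (M \<Otimes>\<^sub>M M) (\<lambda>y. (p, y)) \<in> couplings (return M p) q"
proof -
  define \<gamma> where "\<gamma> = distr q (M \<Otimes>\<^sub>M M) (\<lambda>y. (p, y))"
  have Pair_p: "(\<lambda>y. (p, y)) \<in> measurable q (M \<Otimes>\<^sub>M M)"
    using measurable_ident_sets[OF q(2)] p by (auto intro!: measurable_Pair)
  have "distr \<gamma> (return M p) fst = distr q (return M p) (\<lambda>y. p)"
    unfolding \<gamma>_def using measurable_fst[of M M]
    by (subst distr_distr[OF _ Pair_p]) (simp_all add: o_def cong: measurable_cong_sets)
  also have "\<dots> = return M p"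
    using prob_space.distr_const[OF q(1), of p "return M p"] p return_sets_cong[of "return M p" M]
    by simp
  finally have fst: "distr \<gamma> (return M p) fst = return M p" .
  have "distr \<gamma> q snd = distr q q (\<lambda>y. y)"
    unfolding \<gamma>_def using measurable_snd[of M M] q(2)
    by (subst distr_distr[OF _ Pair_p]) (simp_all add: o_def cong: measurable_cong_sets)
  then have snd: "distr \<gamma> q snd = q"
    by simp
  have "sets \<gamma> = sets (return M p \<Otimes>\<^sub>M q)"
    using q(2) by (simp add: \<gamma>_def cong: sets_pair_measure_cong)
  with fst snd prob_space.prob_space_distr[OF q(1) Pair_p] show ?thesis
    by (simp add: couplings_def \<gamma>_def)
qed

lemma wasserstein_return:
  fixes d :: "'a::{metric_space,second_countable_topology} \<Rightarrow> 'a \<Rightarrow> real"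
  assumes p: "p \<in> Y" and d: "continuous_on (Y \<times> Y) (\<lambda>(x, y). d x y)"
    and d_nonneg: "\<And>x y. x \<in> Y \<Longrightarrow> y \<in> Y \<Longrightarrow> 0 \<le> d x y" and "s > 0"
    and q: "q \<in> borel_prob_measures Y"
  shows "wasserstein d s (return (restrict_space borel Y) p) q = (\<integral>y. d p y powr s \<partial>q) powr (1 / s)"
proof -
  define B where "B = restrict_space borel Y"
  have p_B: "p \<in> space B" "{p} \<in> sets B"
    using p by (auto simp: B_def space_restrict_space sets_restrict_space image_iff intro!: bexI[of _ "{p}"])
  have q_B: "prob_space q" "sets q = sets B"
    using q by (simp_all add: borel_prob_measures_def B_def)
  have "continuous_on (Y \<times> Y) (\<lambda>(x, y). d x y powr s)"
    using continuous_on_powr'[OF d continuous_on_const, of s] d_nonneg \<open>s > 0\<close>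
    by (auto simp: case_prod_beta')
  then have cost: "(\<lambda>(x, y). d x y powr s) \<in> borel_measurable (B \<Otimes>\<^sub>M B)"
    unfolding B_def by (rule borel_measurable_pair_restrict_space)
  have "(INF \<gamma>\<in>couplings (return B p) q. integral\<^sup>L \<gamma> (\<lambda>(x, y). d x y powr s))
      = (INF \<gamma>\<in>couplings (return B p) q. \<integral>y. d p y powr s \<partial>q)"
    using integral_coupling_return[OF _ p_B q_B(2) cost] by (auto intro: INF_cong)
  also have "\<dots> = (\<integral>y. d p y powr s \<partial>q)"
    using distr_Pair_in_couplings_return[OF q_B p_B(1)] by (auto intro: cINF_const)
  finally show ?thesis
    by (simp add: wasserstein_def B_def)
qed

lemma powr_inverse_le_iff:
  fixes x e s :: real
  assumes "x \<ge> 0" "e > 0" "s > 0"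
  shows "x powr (1 / s) \<le> e \<longleftrightarrow> x \<le> e powr s"
proof
  assume "x powr (1 / s) \<le> e"
  then have "(x powr (1 / s)) powr s \<le> e powr s"
    using assms by (intro powr_mono2) auto
  then show "x \<le> e powr s"
    using assms by (simp add: powr_powr)
next
  assume "x \<le> e powr s"
  then have "x powr (1 / s) \<le> (e powr s) powr (1 / s)"
    using assms by (intro powr_mono2) auto
  then show "x powr (1 / s) \<le> e"
    using assms by (simp add: powr_powr)
qed

lemma wasserstein_return_le_iff:
  fixes d :: "'a::{metric_space,second_countable_topology} \<Rightarrow> 'a \<Rightarrow> real"
  assumes p: "p \<in> Y" and d: "continuous_on (Y \<times> Y) (\<lambda>(x, y). d x y)"
    and d_nonneg: "\<And>x y. x \<in> Y \<Longrightarrow> y \<in> Y \<Longrightarrow> 0 \<le> d x y" and "s > 0" and "\<epsilon> > 0"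
    and q: "q \<in> borel_prob_measures Y"
  shows "wasserstein d s (return (restrict_space borel Y) p) q \<le> \<epsilon> \<longleftrightarrow>
    (\<integral>y. d p y powr s \<partial>q) \<le> \<epsilon> powr s"
proof -
  have "0 \<le> (\<integral>y. d p y powr s \<partial>q)"
    by (rule integral_nonneg_AE) simp
  with wasserstein_return[OF assms(1-4) q] \<open>s > 0\<close> \<open>\<epsilon> > 0\<close> show ?thesis
    by (simp add: powr_inverse_le_iff)
qed

lemma borel_prob_measuresD:
  assumes "q \<in> borel_prob_measures Y"
  shows "prob_space q" and "sets q = sets (restrict_space borel Y)" and "space q = Y"
  using assms sets_eq_imp_space_eq[of q "restrict_space borel Y"]
  by (auto simp: borel_prob_measures_def space_restrict_space)

lemma integrable_continuous_on_compact:
  fixes f :: "'a::topological_space \<Rightarrow> real"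
  assumes q: "q \<in> borel_prob_measures Y" and "compact Y" and f: "continuous_on Y f"
  shows "integrable q f"
proof -
  interpret prob_space q by (rule borel_prob_measuresD(1)[OF q])
  obtain C where "\<And>y. y \<in> Y \<Longrightarrow> norm (f y) \<le> C"
    using compact_imp_bounded[OF compact_continuous_image[OF f \<open>compact Y\<close>]] by (auto simp: bounded_iff)
  moreover have "f \<in> borel_measurable q"
    using borel_measurable_continuous_on_restrict[OF f] borel_prob_measuresD(2)[OF q]
    by (simp cong: measurable_cong_sets)
  ultimately show ?thesis
    by (intro integrable_const_bound[where B = C]) (auto simp: borel_prob_measuresD(3)[OF q])
qed

lemma lagrangian_dual_le_integral:
  fixes g c :: "'a::topological_space \<Rightarrow> real"
  assumes q: "q \<in> borel_prob_measures Y" and Y: "compact Y"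
    and g: "continuous_on Y g" and c: "continuous_on Y c"
    and "integral\<^sup>L q c \<le> e" and "l \<ge> 0"
  shows "lagrangian_dual Y g c e l \<le> integral\<^sup>L q g"
proof -
  interpret prob_space q by (rule borel_prob_measuresD(1)[OF q])
  have int: "integrable q g" "integrable q c"
    using integrable_continuous_on_compact[OF q Y] g c by auto
  have "lagrangian_dual Y g c e l + l * e = (\<integral>y. lagrangian_dual Y g c e l + l * e \<partial>q)"
    by (simp add: prob_space)
  also have "\<dots> \<le> (\<integral>y. g y + l * c y \<partial>q)"
  proof (rule integral_mono)
    show "lagrangian_dual Y g c e l + l * e \<le> g y + l * c y" if "y \<in> space q" for y
      using lagrangian_dual_le[OF Y g c, of y e l] that by (simp add: borel_prob_measuresD(3)[OF q])
  qed (use int in auto)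
  also have "\<dots> = integral\<^sup>L q g + l * integral\<^sup>L q c"
    using int by simp
  also have "\<dots> \<le> integral\<^sup>L q g + l * e"
    using \<open>integral\<^sup>L q c \<le> e\<close> \<open>l \<ge> 0\<close> by (simp add: mult_left_mono)
  finally show ?thesis by simp
qed

definition two_point_measure :: "'a::topological_space set \<Rightarrow> real \<Rightarrow> 'a \<Rightarrow> 'a \<Rightarrow> 'a measure" where
  "two_point_measure Y t y1 y2 =
     distr (measure_pmf (bernoulli_pmf t)) (restrict_space borel Y) (\<lambda>b. if b then y1 else y2)"

lemma
  assumes "y1 \<in> Y" "y2 \<in> Y" "t \<in> {0..1}"
  shows two_point_measure_in_borel_prob_measures: "two_point_measure Y t y1 y2 \<in> borel_prob_measures Y"
    and integral_two_point_measure: "f \<in> borel_measurable (restrict_space borel Y) \<Longrightarrow>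
      integral\<^sup>L (two_point_measure Y t y1 y2) f = t * f y1 + (1 - t) * (f y2 :: real)"
proof -
  have T: "(\<lambda>b. if b then y1 else y2) \<in> measurable (measure_pmf (bernoulli_pmf t)) (restrict_space borel Y)"
    using assms by (auto simp: space_restrict_space)
  show "two_point_measure Y t y1 y2 \<in> borel_prob_measures Y"
    using prob_space.prob_space_distr[OF prob_space_measure_pmf T]
    by (simp add: borel_prob_measures_def two_point_measure_def)
  show "integral\<^sup>L (two_point_measure Y t y1 y2) f = t * f y1 + (1 - t) * f y2"
    if "f \<in> borel_measurable (restrict_space borel Y)"
    using integral_distr[OF T that] assms(3) by (simp add: two_point_measure_def algebra_simps)
qed

lemma wasserstein_robust_duality:
  fixes d :: "'a::{metric_space,second_countable_topology} \<Rightarrow> 'a \<Rightarrow> real" and g :: "'a \<Rightarrow> real"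
  assumes Y: "compact Y" and p: "p \<in> Y" and d: "continuous_on (Y \<times> Y) (\<lambda>(x, y). d x y)"
    and d_nonneg: "\<And>x y. x \<in> Y \<Longrightarrow> y \<in> Y \<Longrightarrow> 0 \<le> d x y" and "d p p = 0"
    and "s > 0" and "\<epsilon> > 0" and g: "continuous_on Y g" and K: "\<And>y. y \<in> Y \<Longrightarrow> \<bar>g y\<bar> \<le> K"
  defines "S \<equiv> {q \<in> borel_prob_measures Y. wasserstein d s (return (restrict_space borel Y) p) q \<le> \<epsilon>}"
    and "\<Phi> \<equiv> lagrangian_dual Y g (\<lambda>y. d p y powr s) (\<epsilon> powr s)"
  obtains l where "l \<in> {0..2 * K / \<epsilon> powr s}" and "\<And>l'. l' \<ge> 0 \<Longrightarrow> \<Phi> l' \<le> \<Phi> l"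
    and "(INF q\<in>S. integral\<^sup>L q g) = \<Phi> l"
proof -
  define c where "c = (\<lambda>y. d p y powr s)"
  have c: "continuous_on Y c"
    unfolding c_def using p d_nonneg \<open>s > 0\<close>
    by (intro continuous_on_powr' continuous_on_slice[OF d] continuous_on_const) auto
  have \<Phi>_c: "\<Phi> = lagrangian_dual Y g c (\<epsilon> powr s)"
    unfolding \<Phi>_def c_def ..
  have "c p \<le> 0" "0 < \<epsilon> powr s"
    using \<open>d p p = 0\<close> \<open>\<epsilon> > 0\<close> by (simp_all add: c_def)
  then obtain l where l: "l \<in> {0..2 * K / \<epsilon> powr s}" and lmax: "\<And>l'. l' \<ge> 0 \<Longrightarrow> \<Phi> l' \<le> \<Phi> l"
    using lagrangian_dual_maximum_exists[OF Y p g c _ _ K] unfolding \<Phi>_c by blast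
  have "Y \<noteq> {}" "l \<ge> 0"
    using p l by auto
  then obtain y1 y2 t where y: "y1 \<in> Y" "y2 \<in> Y" "t \<in> {0..1}"
    and "t * c y1 + (1 - t) * c y2 \<le> \<epsilon> powr s" and "t * g y1 + (1 - t) * g y2 = \<Phi> l"
    using lagrangian_dual_attained_by_two_points[OF Y _ g c _ lmax[unfolded \<Phi>_c]] unfolding \<Phi>_c by blast
  then have "two_point_measure Y t y1 y2 \<in> S" and "integral\<^sup>L (two_point_measure Y t y1 y2) g = \<Phi> l"
    using two_point_measure_in_borel_prob_measures[OF y] integral_two_point_measure[OF y]
      wasserstein_return_le_iff[OF p d d_nonneg \<open>s > 0\<close> \<open>\<epsilon> > 0\<close>]
      borel_measurable_continuous_on_restrict[OF g] borel_measurable_continuous_on_restrict[OF c]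
    by (simp_all add: S_def c_def)
  moreover have "\<Phi> l \<le> integral\<^sup>L q g" if "q \<in> S" for q
    using that l lagrangian_dual_le_integral[OF _ Y g c] wasserstein_return_le_iff[OF p d d_nonneg \<open>s > 0\<close> \<open>\<epsilon> > 0\<close>]
    by (auto simp: S_def \<Phi>_def c_def)
  ultimately have "(INF q\<in>S. integral\<^sup>L q g) = \<Phi> l"
    by (intro cInf_eq_minimum) (auto intro: rev_image_eqI)
  with l lmax that show ?thesis by blast
qed

section \<open>The lifted game\<close>

lemma compact_opp_space:
  assumes "\<And>j. j < N \<Longrightarrow> compact (A j)"
  shows "compact (opp_space N A i)"
  unfolding opp_space_def by (rule compact_PiE) (use assms in auto)

lemma opp_space_nonempty:
  assumes "\<And>j. j < N \<Longrightarrow> A j \<noteq> {}"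
  shows "opp_space N A i \<noteq> {}"
  using assms by (simp add: opp_space_def PiE_eq_empty_iff)

lemma opp_profile_in_opp_space:
  assumes "\<And>j. j < N \<Longrightarrow> a j \<in> A j"
  shows "opp_profile N i a \<in> opp_space N A i"
  using assms by (auto simp: opp_space_def opp_profile_def)

lemma opp_profile_fst_in_opp_space:
  assumes "b \<in> opp_space N (\<lambda>j. A j \<times> L j) i"
  shows "opp_profile N i (\<lambda>j. fst (b j)) \<in> opp_space N A i"
  using assms by (auto simp: opp_space_def opp_profile_def PiE_iff mem_Times_iff)

lemma continuous_on_opp_profile_fst:
  "continuous_on UNIV (\<lambda>b :: nat \<Rightarrow> 'a::topological_space \<times> 'b::topological_space.
     opp_profile N i (\<lambda>j. fst (b j)))"
proof (rule continuous_on_coordinatewise_then_product)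
  fix j
  show "continuous_on UNIV (\<lambda>b :: nat \<Rightarrow> 'a \<times> 'b. opp_profile N i (\<lambda>j. fst (b j)) j)"
  proof (cases "j \<in> {..<N} - {i}")
    case True
    then show ?thesis
      by (simp add: opp_profile_def continuous_on_fst continuous_on_product_coordinates)
  next
    case False
    then have "(\<lambda>b :: nat \<Rightarrow> 'a \<times> 'b. opp_profile N i (\<lambda>j. fst (b j)) j) = (\<lambda>b. undefined)"
      by (auto simp: opp_profile_def)
    then show ?thesis
      using continuous_on_const by metis
  qed
qed

lemma opp_profile_fst_restrict:
  "opp_profile N i (\<lambda>j. fst (opp_profile N i (restrict (\<lambda>j. (a j, m j)) {..<N}) j)) = opp_profile N i a"
  by (auto simp: opp_profile_def)

lemma lift_payoff_eq_lagrangian_dual: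
  "lift_payoff N A u d s \<epsilon> i xl b =
     lagrangian_dual (opp_space N A i) (u i (fst xl))
       (\<lambda>y. d i (opp_profile N i (\<lambda>j. fst (b j))) y powr s) (\<epsilon> powr s) (snd xl)"
  by (simp add: lift_payoff_def lagrangian_dual_def)

lemma lift_payoff_restrict:
  "lift_payoff N A u d s \<epsilon> i (x, l) (opp_profile N i (restrict (\<lambda>j. (a j, m j)) {..<N})) =
     lagrangian_dual (opp_space N A i) (u i x) (\<lambda>y. d i (opp_profile N i a) y powr s) (\<epsilon> powr s) l"
  by (simp add: lift_payoff_eq_lagrangian_dual opp_profile_fst_restrict)

lemma lift_actions_eq: "lift_actions N A u s \<epsilon> = (\<lambda>i. A i \<times> {0..lift_bound N A u s \<epsilon> i})"
  by (simp add: fun_eq_iff lift_actions_def)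

locale robust_concave_game =
  fixes N :: nat
    and A :: "nat \<Rightarrow> 'v::euclidean_space set"
    and u :: "nat \<Rightarrow> 'v \<Rightarrow> (nat \<Rightarrow> 'v) \<Rightarrow> real"
    and d :: "nat \<Rightarrow> (nat \<Rightarrow> 'v) \<Rightarrow> (nat \<Rightarrow> 'v) \<Rightarrow> real"
    and \<epsilon> s :: real
  assumes game: "concave_game N A u"
    and nonempty: "\<forall>i<N. A i \<noteq> {}"
    and eps: "\<epsilon> > 0"
    and s: "s \<ge> 1"
    and metric: "\<forall>i<N. Metric_space (opp_space N A i) (d i)"
    and compatible: "\<forall>i<N. Metric_space.mtopology (opp_space N A i) (d i)
                              = subtopology euclidean (opp_space N A i)"
begin

lemma
  assumes "i < N"
  shows compact_actions: "compact (A i)"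
    and convex_actions: "convex (A i)"
    and continuous_payoff: "continuous_on (A i \<times> opp_space N A i) (\<lambda>(x, y). u i x y)"
    and concave_payoff: "y \<in> opp_space N A i \<Longrightarrow> concave_on (A i) (\<lambda>x. u i x y)"
  using game assms by (auto simp: concave_game_def)

lemma compact_opp_actions: "compact (opp_space N A i)"
  by (rule compact_opp_space[OF compact_actions])

lemma opp_actions_nonempty: "opp_space N A i \<noteq> {}"
  using nonempty by (intro opp_space_nonempty) auto

lemma
  assumes "i < N"
  shows continuous_dist: "continuous_on (opp_space N A i \<times> opp_space N A i) (\<lambda>(x, y). d i x y)"
    and dist_nonneg: "x \<in> opp_space N A i \<Longrightarrow> y \<in> opp_space N A i \<Longrightarrow> 0 \<le> d i x y"
    and dist_self: "x \<in> opp_space N A i \<Longrightarrow> d i x x = 0"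
proof -
  show "continuous_on (opp_space N A i \<times> opp_space N A i) (\<lambda>(x, y). d i x y)"
    using metric compatible assms by (intro continuous_on_metric_compatible) auto
  show "0 \<le> d i x y"
    using metric assms by (auto simp: Metric_space_def)
  show "d i x x = 0" if "x \<in> opp_space N A i"
    using metric assms that by (auto simp: Metric_space_def)
qed

lemma abs_payoff_le_bound:
  assumes "i < N" "x \<in> A i" "y \<in> opp_space N A i"
  shows "\<bar>u i x y\<bar> \<le> (SUP p\<in>A i \<times> opp_space N A i. \<bar>u i (fst p) (snd p)\<bar>)"
  using abs_le_SUP_abs_compact[of "A i \<times> opp_space N A i" "\<lambda>p. u i (fst p) (snd p)" "(x, y)"]
    compact_Times[OF compact_actions compact_opp_actions] continuous_payoff assms
  by (simp add: case_prod_beta')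

lemma robust_value_eq_max_dual:
  assumes i: "i < N" and a: "\<And>j. j < N \<Longrightarrow> a j \<in> A j" and x: "x \<in> A i"
  defines "\<Phi> \<equiv> lagrangian_dual (opp_space N A i) (u i x) (\<lambda>y. d i (opp_profile N i a) y powr s) (\<epsilon> powr s)"
  shows "\<exists>l\<in>{0..lift_bound N A u s \<epsilon> i}. (\<forall>l'\<in>{0..lift_bound N A u s \<epsilon> i}. \<Phi> l' \<le> \<Phi> l)
           \<and> robust_value N A u d s \<epsilon> i a x = \<Phi> l"
proof -
  have p: "opp_profile N i a \<in> opp_space N A i"
    by (rule opp_profile_in_opp_space[OF a])
  have s_pos: "s > 0" using s by simp
  obtain l where "l \<in> {0..lift_bound N A u s \<epsilon> i}" "\<And>l'. l' \<ge> 0 \<Longrightarrow> \<Phi> l' \<le> \<Phi> l"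
      "robust_value N A u d s \<epsilon> i a x = \<Phi> l"
    using wasserstein_robust_duality[OF compact_opp_actions p continuous_dist[OF i] dist_nonneg[OF i]
        dist_self[OF i p] s_pos eps continuous_on_slice[OF continuous_payoff[OF i] x]
        abs_payoff_le_bound[OF i x]]
    unfolding \<Phi>_def robust_value_def ambiguity_set_def lift_bound_def by blast
  then show ?thesis by (intro bexI[of _ l]) auto
qed

lemma lift_payoff_continuous:
  assumes i: "i < N"
  shows "continuous_on (lift_actions N A u s \<epsilon> i \<times> opp_space N (lift_actions N A u s \<epsilon>) i)
           (\<lambda>(xl, b). lift_payoff N A u d s \<epsilon> i xl b)"
proof -
  define LA where "LA = lift_actions N A u s \<epsilon>"
  define Z where "Z = LA i \<times> opp_space N LA i"
  define P where "P b = opp_profile N i (\<lambda>j. fst (b j))" for b :: "nat \<Rightarrow> 'v \<times> real"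
  have LA: "LA = (\<lambda>j. A j \<times> {0..lift_bound N A u s \<epsilon> j})"
    by (simp add: LA_def lift_actions_eq)
  have "compact (LA j)" if "j < N" for j
    using compact_actions[OF that] by (simp add: LA compact_Times)
  with i have "compact Z"
    unfolding Z_def by (intro compact_Times compact_opp_space) auto
  have P: "P (snd z) \<in> opp_space N A i" if "z \<in> Z" for z
    using that unfolding Z_def LA P_def by (auto intro: opp_profile_fst_in_opp_space)
  have "continuous_on (Z \<times> opp_space N A i) (\<lambda>w. (\<lambda>(x, y). u i x y) (fst (fst (fst w)), snd w))"
    by (rule continuous_on_compose2[OF continuous_payoff[OF i]])
       (auto intro!: continuous_on_Pair continuous_on_fst continuous_on_snd continuous_on_id
         simp: Z_def LA)
  then have u: "continuous_on (Z \<times> opp_space N A i) (\<lambda>(z, y). u i (fst (fst z)) y)"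
    by (simp add: case_prod_beta')
  have "continuous_on (Z \<times> opp_space N A i) (\<lambda>w. P (snd (fst w)))"
    unfolding P_def
    by (rule continuous_on_compose2[OF continuous_on_opp_profile_fst])
       (auto intro!: continuous_on_fst continuous_on_snd continuous_on_id)
  then have "continuous_on (Z \<times> opp_space N A i) (\<lambda>w. (\<lambda>(x, y). d i x y) (P (snd (fst w)), snd w))"
    by (intro continuous_on_compose2[OF continuous_dist[OF i]] continuous_on_Pair continuous_on_snd
        continuous_on_id) (auto dest: P)
  then have d: "continuous_on (Z \<times> opp_space N A i) (\<lambda>(z, y). d i (P (snd z)) y powr s)"
    using dist_nonneg[OF i] P s
    by (auto simp: case_prod_beta' intro!: continuous_on_powr' continuous_on_const)
  have "continuous_on Z (\<lambda>z. snd (fst z))"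
    by (intro continuous_intros)
  from continuous_on_lagrangian_dual[OF \<open>compact Z\<close> compact_opp_actions opp_actions_nonempty u d this]
  have "continuous_on Z (\<lambda>z. lagrangian_dual (opp_space N A i) (u i (fst (fst z)))
      (\<lambda>y. d i (P (snd z)) y powr s) (\<epsilon> powr s) (snd (fst z)))" .
  then show ?thesis
    by (simp add: Z_def LA_def P_def lift_payoff_eq_lagrangian_dual case_prod_beta')
qed

lemma lift_payoff_concave:
  assumes i: "i < N" and b: "b \<in> opp_space N (lift_actions N A u s \<epsilon>) i"
  shows "concave_on (lift_actions N A u s \<epsilon> i) (\<lambda>xl. lift_payoff N A u d s \<epsilon> i xl b)"
proof -
  define c where "c y = d i (opp_profile N i (\<lambda>j. fst (b j))) y powr s" for y
  have p: "opp_profile N i (\<lambda>j. fst (b j)) \<in> opp_space N A i"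
    using b by (intro opp_profile_fst_in_opp_space) (simp add: lift_actions_eq)
  have c: "continuous_on (opp_space N A i) c"
    unfolding c_def using p dist_nonneg[OF i] s
    by (intro continuous_on_powr' continuous_on_slice[OF continuous_dist[OF i]] continuous_on_const) auto
  have convex: "convex (lift_actions N A u s \<epsilon> i)"
    by (simp add: lift_actions_def convex_Times convex_actions[OF i])
  have "concave_on (lift_actions N A u s \<epsilon> i) (\<lambda>z. INF y\<in>opp_space N A i. u i (fst z) y + snd z * c y)"
  proof (rule concave_on_INF[OF convex opp_actions_nonempty])
    show "concave_on (lift_actions N A u s \<epsilon> i) (\<lambda>z. u i (fst z) y + snd z * c y)"
      if "y \<in> opp_space N A i" for y
      unfolding lift_actions_def
      by (intro concave_on_add concave_on_fst_Times concave_on_snd_mult concave_payoff[OF i that])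
        (auto intro!: convex_Times convex_actions[OF i])
    show "bdd_below ((\<lambda>y. u i (fst z) y + snd z * c y) ` opp_space N A i)"
      if "z \<in> lift_actions N A u s \<epsilon> i" for z
      using that by (intro bdd_below_image_compact[OF compact_opp_actions] continuous_intros
          continuous_on_slice[OF continuous_payoff[OF i]] c) (auto simp: lift_actions_def)
  qed
  then have "concave_on (lift_actions N A u s \<epsilon> i)
      (\<lambda>z. (INF y\<in>opp_space N A i. u i (fst z) y + snd z * c y) - snd z * \<epsilon> powr s)"
    by (intro concave_on_diff convex_on_snd_mult convex)
  then show ?thesis
    by (simp add: lift_payoff_eq_lagrangian_dual lagrangian_dual_def c_def)
qed

lemma lifted_concave_game:
  "concave_game N (lift_actions N A u s \<epsilon>) (lift_payoff N A u d s \<epsilon>)"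
  unfolding concave_game_def
  using compact_actions convex_actions lift_payoff_continuous lift_payoff_concave
  by (auto simp: lift_actions_def intro!: compact_Times convex_Times)

lemma strategically_robust_eq_iff_lifted_nash:
  "strategically_robust_eq N A u d s \<epsilon> a \<longleftrightarrow>
     (\<exists>m. (\<forall>i<N. m i \<ge> 0) \<and>
        nash_equilibrium N (lift_actions N A u s \<epsilon>) (lift_payoff N A u d s \<epsilon>) (restrict (\<lambda>i. (a i, m i)) {..<N}))"
proof -
  define M where "M i = lift_bound N A u s \<epsilon> i" for i
  define \<Phi> where "\<Phi> i x = lagrangian_dual (opp_space N A i) (u i x)
      (\<lambda>y. d i (opp_profile N i a) y powr s) (\<epsilon> powr s)" for i x
  have nash_iff: "nash_equilibrium N (lift_actions N A u s \<epsilon>) (lift_payoff N A u d s \<epsilon>)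
        (restrict (\<lambda>i. (a i, m i)) {..<N}) \<longleftrightarrow>
      (\<forall>i<N. a i \<in> A i \<and> m i \<in> {0..M i} \<and> (\<forall>x\<in>A i. \<forall>l\<in>{0..M i}. \<Phi> i x l \<le> \<Phi> i (a i) (m i)))"
    for m
    by (auto simp: nash_equilibrium_def lift_actions_def lift_payoff_restrict \<Phi>_def M_def)
  show ?thesis
  proof (cases "\<forall>j<N. a j \<in> A j")
    case False
    then show ?thesis
      by (auto simp: strategically_robust_eq_def nash_iff)
  next
    case True
    have "(\<forall>x\<in>A i. robust_value N A u d s \<epsilon> i a x \<le> robust_value N A u d s \<epsilon> i a (a i)) \<longleftrightarrow>
        (\<exists>mi\<in>{0..M i}. \<forall>x\<in>A i. \<forall>l\<in>{0..M i}. \<Phi> i x l \<le> \<Phi> i (a i) mi)" if "i < N" for i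
      using True that
      by (intro maximiser_of_max_iff) (auto simp: \<Phi>_def M_def intro!: robust_value_eq_max_dual)
    then have "strategically_robust_eq N A u d s \<epsilon> a \<longleftrightarrow>
        (\<forall>i<N. \<exists>mi\<in>{0..M i}. \<forall>x\<in>A i. \<forall>l\<in>{0..M i}. \<Phi> i x l \<le> \<Phi> i (a i) mi)"
      using True by (simp add: strategically_robust_eq_def)
    also have "\<dots> \<longleftrightarrow> (\<exists>m. \<forall>i<N. m i \<in> {0..M i} \<and> (\<forall>x\<in>A i. \<forall>l\<in>{0..M i}. \<Phi> i x l \<le> \<Phi> i (a i) (m i)))"
      by (simp add: Bex_def choice_iff')
    finally show ?thesis
      using True by (auto simp: nash_iff)
  qed
qed

end

theorem proposition3:
  fixes N :: nat
    and A :: "nat \<Rightarrow> 'v::euclidean_space set"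
    and u :: "nat \<Rightarrow> 'v \<Rightarrow> (nat \<Rightarrow> 'v) \<Rightarrow> real"
    and d :: "nat \<Rightarrow> (nat \<Rightarrow> 'v) \<Rightarrow> (nat \<Rightarrow> 'v) \<Rightarrow> real"
    and \<epsilon> s :: real
  assumes game: "concave_game N A u"
    and nonempty: "\<forall>i<N. A i \<noteq> {}"
    and eps: "\<epsilon> > 0"
    and s: "s \<ge> 1"
    and metric: "\<forall>i<N. Metric_space (opp_space N A i) (d i)"
    and compatible: "\<forall>i<N. Metric_space.mtopology (opp_space N A i) (d i)
                              = subtopology euclidean (opp_space N A i)"
  shows "concave_game N (lift_actions N A u s \<epsilon>) (lift_payoff N A u d s \<epsilon>)
       \<and> (\<forall>abar :: nat \<Rightarrow> 'v.
            strategically_robust_eq N A u d s \<epsilon> abar \<longleftrightarrow>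
            (\<exists>lam :: nat \<Rightarrow> real. (\<forall>i<N. lam i \<ge> 0) \<and>
               nash_equilibrium N (lift_actions N A u s \<epsilon>) (lift_payoff N A u d s \<epsilon>)
                 (restrict (\<lambda>i. (abar i, lam i)) {..<N})))"
proof -
  interpret robust_concave_game N A u d \<epsilon> s
    using assms by unfold_locales
  show ?thesis
    using lifted_concave_game strategically_robust_eq_iff_lifted_nash by blast
qed

end
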